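(* Let $0<p<1$, $q=1-p$, let $\mathcal{B}=\{(x_i,t_i)\}_{i\in\mathbb{Z}}\subset\mathbb{Z}^2$ be a boundary set and $\tilde L$ the associated region, and let $(x^0,t^0)\in\tilde L$. Then the function on $\mathcal{B}$ $$\mathcal{G}^{\mathcal{B}}((x',t')|(x^0,t^0))=P_e^{\mathcal{B}}((x',t'))\,G((x',t')|(x^0,t^0)),\qquad (x',t')\in\mathcal{B},$$ defines a probability measure on $\mathcal{B}$, i.e. it is nonnegative and $\sum_{(x',t')\in\mathcal{B}}\mathcal{G}^{\mathcal{B}}((x',t')|(x^0,t^0))=1$.
   Context: Points of $\mathbb{Z}^2$ are written $(x,t)$ (space, time). A boundary set is $\mathcal{B}=\{(x_i,t_i)\}_{i\in\mathbb{Z}}$ such that for every $i\in\mathbb{Z}$ either $(x_{i+1},t_{i+1})=(x_i+1,t_i)$ or $(x_{i+1},t_{i+1})=(x_i,t_i-1)$. Its region is $\tilde L=\bigcup_{(x,t)\in\mathcal{B}}\{(x',t')\in\mathbb{Z}^2: x'\le x,\ t'\le t\}$, and $\tilde L^c=\mathbb{Z}^2\setminus\tilde L$. Single-step weights of the directed Bernoulli random walk: $W(\{(x,t),(x,t+1)\})=q$, $W(\{(x,t),(x+1,t+1)\})=p$, all other one-step weights zero. The one-particle Green function is $G((x,t)|(x^0,t^0))=\binom{t-t^0}{x-x^0}p^{x-x^0}q^{t-t^0-(x-x^0)}$ if $0\le x-x^0\le t-t^0$ and $0$ otherwise (the total weight of directed paths from $(x^0,t^0)$ to $(x,t)$). The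 exit probability at $(x,t)\in\mathcal{B}$ is $P_e^{\mathcal{B}}((x,t))=\sum_{x'':\,(x'',t+1)\in\tilde L^c}W(\{(x,t),(x'',t+1)\})$. *)

theory Defs
  imports "HOL-Analysis.Analysis"
begin

type_synonym pt = "int \<times> int"   (* (x, t) = (space, time) *)

definition boundary_set :: "(int \<Rightarrow> pt) \<Rightarrow> bool" where
  "boundary_set b \<longleftrightarrow> (\<forall>i. b (i+1) = (fst (b i) + 1, snd (b i)) \<or> b (i+1) = (fst (b i), snd (b i) - 1))"

definition region :: "(int \<Rightarrow> pt) \<Rightarrow> pt set" where
  "region b = (\<Union>z\<in>range b. {(x', t'). x' \<le> fst z \<and> t' \<le> snd z})"

definition W :: "real \<Rightarrow> pt \<Rightarrow> pt \<Rightarrow> real" where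
  "W p u v = (if v = (fst u, snd u + 1) then 1 - p
              else if v = (fst u + 1, snd u + 1) then p else 0)"

definition green :: "real \<Rightarrow> pt \<Rightarrow> pt \<Rightarrow> real" where
  "green p z z0 = (let dx = fst z - fst z0; dt = snd z - snd z0 in
     if 0 \<le> dx \<and> dx \<le> dt
     then real (nat dt choose nat dx) * p ^ nat dx * (1 - p) ^ nat (dt - dx) else 0)"

(* exit probability: sum of W((x,t),(x'',t+1)) over x'' with (x'',t+1) outside the region.
   W vanishes unless x'' \<in> {x, x+1}, so the sum is restricted to those (finitely many) x''. *)
definition exit_prob :: "real \<Rightarrow> (int \<Rightarrow> pt) \<Rightarrow> pt \<Rightarrow> real" where
  "exit_prob p b z = (\<Sum>x''\<in>{x''\<in>{fst z, fst z + 1}. (x'', snd z + 1) \<notin> region b}.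
       W p z (x'', snd z + 1))"

definition exit_green :: "real \<Rightarrow> (int \<Rightarrow> pt) \<Rightarrow> pt \<Rightarrow> pt \<Rightarrow> real" where
  "exit_green p b z z0 = exit_prob p b z * green p z z0"

end

theory Submission
  imports Defs "HOL-Real_Asymp.Real_Asymp"
begin

(* Let A n (region_mass) be the Green mass of the walk from z0 = (x0, t0) that is still in
   the region at time t0 + n, and E n (exit_mass) the part of it that leaves the region in the
   next step.  Pascal's rule for the Green function says that one step of the walk conserves
   mass, which gives A (n + 1) = A n - E n and hence E 0 + ... + E (N - 1) = 1 - A N.  The
   region lies to the left of x = x_i + 1 from time t_i + 1 on, because the corner
   (x_i + 1, t_i + 1) is outside it, so A N is eventually bounded by finitely many binomial
   weights, which tend to 0.  Finally, a point of the region whose upper-right neighbour is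
   outside the region lies on the boundary, so only boundary points have positive exit
   probability and the E n add up the exit Green function over the boundary. *)

lemma boundary_set_step:
  assumes "boundary_set b"
  shows "b (i + 1) = (fst (b i) + 1, snd (b i)) \<or> b (i + 1) = (fst (b i), snd (b i) - 1)"
  using assms unfolding boundary_set_def by blast

lemma boundary_set_fst_minus_snd:
  assumes "boundary_set b"
  shows "fst (b i) - snd (b i) = fst (b 0) - snd (b 0) + i"
proof (induction i rule: int_induct[where k = 0])
  case (step1 i)
  then show ?case using boundary_set_step[OF assms, of i] by auto
next
  case (step2 i)
  then show ?case using boundary_set_step[OF assms, of "i - 1"] by auto
qed simp

lemma boundary_set_mono:
  assumes "boundary_set b" and "i \<le> j"
  shows "fst (b i) \<le> fst (b j) \<and> snd (b j) \<le> snd (b i)"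
  using assms(2)
proof (induction j rule: int_ge_induct)
  case (step j)
  then show ?case using boundary_set_step[OF assms(1), of j] by auto
qed simp

lemma mem_region_iff: "(x, t) \<in> region b \<longleftrightarrow> (\<exists>i. x \<le> fst (b i) \<and> t \<le> snd (b i))"
  unfolding region_def by auto

lemma region_downward_closed:
  "(x, t) \<in> region b \<Longrightarrow> x' \<le> x \<Longrightarrow> t' \<le> t \<Longrightarrow> (x', t') \<in> region b"
  unfolding mem_region_iff by (meson order_trans)

lemma boundary_in_region: "b i \<in> region b"
  by (cases "b i") (auto simp: mem_region_iff intro: exI[of _ i])

lemma boundary_corner_notin_region:
  assumes "boundary_set b"
  shows "(fst (b i) + 1, snd (b i) + 1) \<notin> region b"
proof
  assume "(fst (b i) + 1, snd (b i) + 1) \<in> region b"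
  then obtain j where "fst (b i) < fst (b j)" "snd (b i) < snd (b j)"
    unfolding mem_region_iff by (auto simp: add1_zle_eq)
  then show False
    using boundary_set_mono[OF assms, of i j] boundary_set_mono[OF assms, of j i] by linarith
qed

lemma region_corner_in_boundary:
  assumes bs: "boundary_set b" and "(x, t) \<in> region b" and corner: "(x + 1, t + 1) \<notin> region b"
  shows "(x, t) \<in> range b"
proof -
  obtain i where i: "x \<le> fst (b i)" "t \<le> snd (b i)"
    using assms(2) unfolding mem_region_iff by blast
  define j where "j = x - t - (fst (b 0) - snd (b 0))"
  have diag: "fst (b j) - snd (b j) = x - t"
    using boundary_set_fst_minus_snd[OF bs, of j] by (simp add: j_def)
  have "\<not> (x < fst (b j) \<and> t < snd (b j))"
    using corner unfolding mem_region_iff by (auto simp: add1_zle_eq)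
  moreover have "\<not> (fst (b j) < x \<and> snd (b j) < t)"
    using i boundary_set_mono[OF bs, of i j] boundary_set_mono[OF bs, of j i] by linarith
  ultimately have "b j = (x, t)"
    using diag by (auto simp: prod_eq_iff)
  then show ?thesis by (metis rangeI)
qed

definition binomial_weight :: "real \<Rightarrow> nat \<Rightarrow> nat \<Rightarrow> real" where
  "binomial_weight p n k = (if k \<le> n then real (n choose k) * p ^ k * (1 - p) ^ (n - k) else 0)"

lemma binomial_weight_nonneg: "0 \<le> p \<Longrightarrow> p \<le> 1 \<Longrightarrow> 0 \<le> binomial_weight p n k"
  unfolding binomial_weight_def by simp

lemma binomial_weight_0_Suc:
  "binomial_weight p (Suc n) 0 = (1 - p) * binomial_weight p n 0"
  unfolding binomial_weight_def by simp

lemma binomial_weight_Suc_Suc: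
  "binomial_weight p (Suc n) (Suc k) = (1 - p) * binomial_weight p n (Suc k) + p * binomial_weight p n k"
proof (cases "k < n")
  case True
  then have "n - k = Suc (n - Suc k)" by simp
  then show ?thesis using True unfolding binomial_weight_def by (simp add: algebra_simps)
qed (auto simp: binomial_weight_def)

lemma binomial_weight_tendsto_0:
  fixes p :: real
  assumes "0 < p" "p < 1"
  shows "(\<lambda>n. binomial_weight p n k) \<longlonglongrightarrow> 0"
proof (rule tendsto_sandwich)
  show "\<forall>\<^sub>F n in sequentially. 0 \<le> binomial_weight p n k"
    using assms by (simp add: binomial_weight_nonneg)
  show "\<forall>\<^sub>F n in sequentially. binomial_weight p n k \<le> real n ^ k * (1 - p) ^ n / (1 - p) ^ k"
  proof (rule eventually_sequentiallyI)
    fix n assume "k \<le> n"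
    have "real (n choose k) * p ^ k \<le> real n ^ k * 1"
      using assms binomial_le_pow[OF \<open>k \<le> n\<close>]
      by (intro mult_mono) (auto simp: power_le_one simp flip: of_nat_power)
    then show "binomial_weight p n k \<le> real n ^ k * (1 - p) ^ n / (1 - p) ^ k"
      using assms \<open>k \<le> n\<close> unfolding binomial_weight_def
      by (simp add: power_diff) (intro divide_right_mono mult_right_mono, auto)
  qed
  show "(\<lambda>n. real n ^ k * (1 - p) ^ n / (1 - p) ^ k) \<longlonglongrightarrow> 0"
    using assms by real_asymp
qed simp

lemma green_shift: "green p (x0 + int k, t0 + int n) (x0, t0) = binomial_weight p n k"
  unfolding green_def binomial_weight_def Let_def by (auto simp: nat_diff_distrib)

lemma green_left_eq_0: "x < x0 \<Longrightarrow> green p (x, t) (x0, t0) = 0"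
  unfolding green_def Let_def by simp

lemma green_right_eq_0: "x0 + int n < x \<Longrightarrow> green p (x, t0 + int n) (x0, t0) = 0"
  unfolding green_def Let_def by simp

lemma green_nonneg: "0 \<le> p \<Longrightarrow> p \<le> 1 \<Longrightarrow> 0 \<le> green p z z0"
  unfolding green_def Let_def by auto

lemma green_eq_0_outside_cone:
  assumes "green p (x, t) (x0, t0) \<noteq> 0"
  obtains n where "t = t0 + int n" "x0 \<le> x" "x \<le> x0 + int n"
proof
  show "t = t0 + int (nat (t - t0))" "x0 \<le> x" "x \<le> x0 + int (nat (t - t0))"
    using assms unfolding green_def Let_def by (auto split: if_splits)
qed

lemma green_pascal:
  "green p (x, t0 + int (Suc n)) (x0, t0)
     = (1 - p) * green p (x, t0 + int n) (x0, t0) + p * green p (x - 1, t0 + int n) (x0, t0)"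
proof (cases "x0 \<le> x")
  case True
  define k where "k = nat (x - x0)"
  with True have k: "x = x0 + int k" by simp
  show ?thesis
  proof (cases k)
    case 0
    have "green p (x - 1, t0 + int n) (x0, t0) = 0"
      using k 0 by (simp add: green_left_eq_0)
    then show ?thesis
      using green_shift[of p x0 0 t0 "Suc n"] green_shift[of p x0 0 t0 n] k 0
      by (simp add: binomial_weight_0_Suc)
  next
    case (Suc m)
    have "x - 1 = x0 + int m" using k Suc by simp
    then show ?thesis
      using green_shift[of p x0 "Suc m" t0 "Suc n"] green_shift[of p x0 "Suc m" t0 n]
        green_shift[of p x0 m t0 n] k Suc
      by (simp add: binomial_weight_Suc_Suc)
  qed
qed (simp add: green_left_eq_0)

lemma sum_green_Suc:
  fixes f :: "int \<Rightarrow> real"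
  shows "(\<Sum>x = x0..x0 + int (Suc n). f x * green p (x, t0 + int (Suc n)) (x0, t0))
       = (\<Sum>x = x0..x0 + int n. green p (x, t0 + int n) (x0, t0) * ((1 - p) * f x + p * f (x + 1)))"
proof -
  define g where "g x = green p (x, t0 + int n) (x0, t0)" for x
  have "(\<Sum>x = x0..x0 + int (Suc n). f x * green p (x, t0 + int (Suc n)) (x0, t0))
      = (\<Sum>x = x0..x0 + int (Suc n). (1 - p) * (f x * g x) + p * (f x * g (x - 1)))"
    unfolding g_def green_pascal by (simp add: mult_ac distrib_left)
  also have "\<dots> = (1 - p) * (\<Sum>x = x0..x0 + int (Suc n). f x * g x)
      + p * (\<Sum>x = x0..x0 + int (Suc n). f x * g (x - 1))"
    by (simp add: sum.distrib sum_distrib_left)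
  also have "(\<Sum>x = x0..x0 + int (Suc n). f x * g x) = (\<Sum>x = x0..x0 + int n. f x * g x)"
    by (rule sum.mono_neutral_right) (auto simp: g_def green_right_eq_0)
  also have "(\<Sum>x = x0..x0 + int (Suc n). f x * g (x - 1)) = (\<Sum>x = x0 - 1..x0 + int n. f (x + 1) * g x)"
    by (rule sum.reindex_bij_witness[where i = "\<lambda>x. x + 1" and j = "\<lambda>x. x - 1"]) auto
  also have "\<dots> = (\<Sum>x = x0..x0 + int n. f (x + 1) * g x)"
    by (rule sum.mono_neutral_right) (auto simp: g_def green_left_eq_0)
  also have "(1 - p) * (\<Sum>x = x0..x0 + int n. f x * g x) + p * (\<Sum>x = x0..x0 + int n. f (x + 1) * g x)
      = (\<Sum>x = x0..x0 + int n. g x * ((1 - p) * f x + p * f (x + 1)))"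
    by (simp add: sum.distrib sum_distrib_left distrib_left mult_ac)
  finally show ?thesis by (simp only: g_def)
qed

lemma exit_prob_eq:
  "exit_prob p b (x, t)
     = (1 - p) * of_bool ((x, t + 1) \<notin> region b) + p * of_bool ((x + 1, t + 1) \<notin> region b)"
  unfolding exit_prob_def by (subst sum.inter_filter) (simp_all add: W_def)

lemma exit_prob_nonneg: "0 \<le> p \<Longrightarrow> p \<le> 1 \<Longrightarrow> 0 \<le> exit_prob p b z"
  by (cases z) (simp add: exit_prob_eq)

lemma exit_green_nonneg: "0 \<le> p \<Longrightarrow> p \<le> 1 \<Longrightarrow> 0 \<le> exit_green p b z z0"
  unfolding exit_green_def by (intro mult_nonneg_nonneg exit_prob_nonneg green_nonneg)

lemma exit_prob_eq_0_off_boundary: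
  assumes "boundary_set b" and "(x, t) \<in> region b" and "(x, t) \<notin> range b"
  shows "exit_prob p b (x, t) = 0"
proof -
  have "(x + 1, t + 1) \<in> region b"
    using region_corner_in_boundary[OF assms(1,2)] assms(3) by blast
  moreover from this have "(x, t + 1) \<in> region b"
    by (rule region_downward_closed) auto
  ultimately show ?thesis by (simp add: exit_prob_eq)
qed

definition region_row :: "(int \<Rightarrow> pt) \<Rightarrow> int \<Rightarrow> int \<Rightarrow> nat \<Rightarrow> int set" where
  "region_row b x0 t0 n = {x \<in> {x0..x0 + int n}. (x, t0 + int n) \<in> region b}"

definition region_mass :: "real \<Rightarrow> (int \<Rightarrow> pt) \<Rightarrow> int \<Rightarrow> int \<Rightarrow> nat \<Rightarrow> real" where
  "region_mass p b x0 t0 n = (\<Sum>x\<in>region_row b x0 t0 n. green p (x, t0 + int n) (x0, t0))"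

definition exit_mass :: "real \<Rightarrow> (int \<Rightarrow> pt) \<Rightarrow> int \<Rightarrow> int \<Rightarrow> nat \<Rightarrow> real" where
  "exit_mass p b x0 t0 n = (\<Sum>x\<in>region_row b x0 t0 n. exit_green p b (x, t0 + int n) (x0, t0))"

lemma finite_region_row: "finite (region_row b x0 t0 n)"
  unfolding region_row_def by (rule finite_subset[of _ "{x0..x0 + int n}"]) auto

lemma sum_region_row:
  fixes f :: "int \<Rightarrow> 'a::semiring_1"
  shows "(\<Sum>x\<in>region_row b x0 t0 n. f x)
           = (\<Sum>x = x0..x0 + int n. of_bool ((x, t0 + int n) \<in> region b) * f x)"
  unfolding region_row_def sum.inter_filter[OF finite_atLeastAtMost_int] by (intro sum.cong) auto

lemma region_mass_0:
  assumes "(x0, t0) \<in> region b"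
  shows "region_mass p b x0 t0 0 = 1"
proof -
  have "region_row b x0 t0 0 = {x0}"
    using assms by (auto simp: region_row_def)
  then show ?thesis
    using green_shift[of p x0 0 t0 0] by (simp add: region_mass_def binomial_weight_def)
qed

lemma region_mass_Suc:
  "region_mass p b x0 t0 (Suc n) = region_mass p b x0 t0 n - exit_mass p b x0 t0 n"
proof -
  define t where "t = t0 + int n"
  have t_Suc: "t0 + int (Suc n) = t + 1" by (simp add: t_def)
  define inside where "inside z = (of_bool (z \<in> region b) :: real)" for z
  have step: "(1 - p) * inside (x, t + 1) + p * inside (x + 1, t + 1)
      = inside (x, t) * (1 - exit_prob p b (x, t))" for x
  proof (cases "(x, t) \<in> region b")
    case False
    then have "(x, t + 1) \<notin> region b" "(x + 1, t + 1) \<notin> region b"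
      using region_downward_closed[of _ _ b x t] by force+
    with False show ?thesis by (simp add: inside_def)
  qed (simp add: inside_def exit_prob_eq algebra_simps)
  have "region_mass p b x0 t0 (Suc n)
      = (\<Sum>x = x0..x0 + int (Suc n). inside (x, t + 1) * green p (x, t0 + int (Suc n)) (x0, t0))"
    unfolding region_mass_def sum_region_row inside_def t_Suc ..
  also have "\<dots> = (\<Sum>x = x0..x0 + int n.
                      inside (x, t) * green p (x, t) (x0, t0) * (1 - exit_prob p b (x, t)))"
    unfolding sum_green_Suc step by (simp add: t_def mult_ac)
  also have "\<dots> = region_mass p b x0 t0 n - exit_mass p b x0 t0 n"
    unfolding region_mass_def exit_mass_def sum_region_row exit_green_def inside_def t_def
    by (simp add: sum_subtractf algebra_simps)
  finally show ?thesis .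
qed

lemma sum_exit_mass:
  "(x0, t0) \<in> region b \<Longrightarrow> (\<Sum>n<N. exit_mass p b x0 t0 n) = 1 - region_mass p b x0 t0 N"
  by (induction N) (simp_all add: region_mass_0 region_mass_Suc)

lemma region_mass_tendsto_0:
  fixes p :: real
  assumes p: "0 < p" "p < 1" and bs: "boundary_set b"
  shows "region_mass p b x0 t0 \<longlonglongrightarrow> 0"
proof (rule tendsto_sandwich[of "\<lambda>_. 0"])
  define a where "a = fst (b 0) + 1"
  define c where "c = snd (b 0) + 1"
  define K where "K = nat (a - x0)"
  have corner: "(a, c) \<notin> region b"
    unfolding a_def c_def by (rule boundary_corner_notin_region[OF bs])
  show "\<forall>\<^sub>F n in sequentially. region_mass p b x0 t0 n \<le> (\<Sum>k<K. binomial_weight p n k)"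
  proof (rule eventually_sequentiallyI)
    fix n assume n: "nat (c - t0) \<le> n"
    have "region_row b x0 t0 n \<subseteq> (\<lambda>k. x0 + int k) ` {..<K}"
    proof
      fix x assume x: "x \<in> region_row b x0 t0 n"
      then have "x < a"
        using corner region_downward_closed[of x "t0 + int n" b a c] n
        by (force simp: region_row_def)
      with x show "x \<in> (\<lambda>k. x0 + int k) ` {..<K}"
        by (intro rev_image_eqI[of "nat (x - x0)"]) (auto simp: region_row_def K_def)
    qed
    then have "region_mass p b x0 t0 n
        \<le> (\<Sum>x\<in>(\<lambda>k. x0 + int k) ` {..<K}. green p (x, t0 + int n) (x0, t0))"
      unfolding region_mass_def using p by (intro sum_mono2 green_nonneg) auto
    also have "\<dots> = (\<Sum>k<K. binomial_weight p n k)"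
      by (subst sum.reindex) (auto simp: inj_on_def green_shift)
    finally show "region_mass p b x0 t0 n \<le> (\<Sum>k<K. binomial_weight p n k)" .
  qed
  show "(\<lambda>n. \<Sum>k<K. binomial_weight p n k) \<longlonglongrightarrow> 0"
    using p by (intro tendsto_null_sum binomial_weight_tendsto_0)
  show "\<forall>\<^sub>F n in sequentially. 0 \<le> region_mass p b x0 t0 n"
    using p by (simp add: region_mass_def sum_nonneg green_nonneg)
qed simp

lemma exit_mass_has_sum:
  fixes p :: real
  assumes "0 < p" "p < 1" and "boundary_set b" and "(x0, t0) \<in> region b"
  shows "(exit_mass p b x0 t0 has_sum 1) UNIV"
proof (rule sums_nonneg_imp_has_sum)
  have "(\<lambda>N. 1 - region_mass p b x0 t0 N) \<longlonglongrightarrow> 1 - 0"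
    using assms by (intro tendsto_diff tendsto_const region_mass_tendsto_0)
  then show "exit_mass p b x0 t0 sums 1"
    by (simp add: sums_def sum_exit_mass[OF assms(4)])
  show "0 \<le> exit_mass p b x0 t0 n" for n
    using assms by (simp add: exit_mass_def sum_nonneg exit_green_nonneg)
qed

lemma exit_green_has_sum_rows:
  fixes p :: real
  assumes "0 < p" "p < 1" and "boundary_set b" and "(x0, t0) \<in> region b"
  shows "((\<lambda>(n, x). exit_green p b (x, t0 + int n) (x0, t0)) has_sum 1)
           (SIGMA n:UNIV. region_row b x0 t0 n)"
proof -
  have row: "((\<lambda>x. exit_green p b (x, t0 + int n) (x0, t0)) has_sum exit_mass p b x0 t0 n)
               (region_row b x0 t0 n)" for n
    unfolding exit_mass_def by (rule has_sum_finite[OF finite_region_row])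
  have total: "(exit_mass p b x0 t0 has_sum 1) UNIV"
    by (rule exit_mass_has_sum[OF assms])
  show ?thesis
  proof (rule has_sum_SigmaI)
    show "(\<lambda>(n, x). exit_green p b (x, t0 + int n) (x0, t0))
            summable_on (SIGMA n:UNIV. region_row b x0 t0 n)"
      using assms by (intro summable_on_SigmaI[OF _ has_sum_imp_summable[OF total]])
        (use row in \<open>auto intro: exit_green_nonneg\<close>)
  qed (use row total in auto)
qed

lemma has_sum_exit_green_rows_iff_boundary:
  assumes "boundary_set b"
  shows "((\<lambda>z. exit_green p b z (x0, t0)) has_sum s)
           ((\<lambda>(n, x). (x, t0 + int n)) ` (SIGMA n:UNIV. region_row b x0 t0 n))
         \<longleftrightarrow> ((\<lambda>z. exit_green p b z (x0, t0)) has_sum s) (range b)"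
proof (rule has_sum_cong_neutral)
  fix z assume z: "z \<in> range b - (\<lambda>(n, x). (x, t0 + int n)) ` (SIGMA n:UNIV. region_row b x0 t0 n)"
  obtain x t where "z = (x, t)" by fastforce
  show "exit_green p b z (x0, t0) = 0"
  proof (rule ccontr)
    assume "exit_green p b z (x0, t0) \<noteq> 0"
    then obtain n where "t = t0 + int n" "x0 \<le> x" "x \<le> x0 + int n"
      by (auto simp: exit_green_def \<open>z = (x, t)\<close> elim: green_eq_0_outside_cone)
    then have "(n, x) \<in> (SIGMA n:UNIV. region_row b x0 t0 n)"
      using z boundary_in_region by (auto simp: region_row_def \<open>z = (x, t)\<close>)
    with z show False by (auto simp: \<open>z = (x, t)\<close> \<open>t = t0 + int n\<close>)
  qed
next
  fix z assume "z \<in> (\<lambda>(n, x). (x, t0 + int n)) ` (SIGMA n:UNIV. region_row b x0 t0 n) - range b"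
  then obtain n x where "z = (x, t0 + int n)" "(x, t0 + int n) \<in> region b" "z \<notin> range b"
    by (auto simp: region_row_def)
  then show "exit_green p b z (x0, t0) = 0"
    using exit_prob_eq_0_off_boundary[OF assms] by (simp add: exit_green_def)
qed simp

theorem proposition3:
  fixes p :: real and b :: "int \<Rightarrow> int \<times> int" and z0 :: "int \<times> int"
  assumes "0 < p" "p < 1"
    and "boundary_set b"
    and "z0 \<in> region b"
  shows "(\<forall>z\<in>range b. exit_green p b z z0 \<ge> 0)
         \<and> ((\<lambda>z. exit_green p b z z0) has_sum 1) (range b)"
proof
  show "\<forall>z\<in>range b. exit_green p b z z0 \<ge> 0"
    using assms by (simp add: exit_green_nonneg)
  obtain x0 t0 where z0: "z0 = (x0, t0)" by fastforce
  have "inj_on (\<lambda>(n :: nat, x :: int). (x, t0 + int n)) (SIGMA n:UNIV. region_row b x0 t0 n)"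
    by (auto simp: inj_on_def)
  then have "((\<lambda>z. exit_green p b z (x0, t0)) has_sum 1)
               ((\<lambda>(n, x). (x, t0 + int n)) ` (SIGMA n:UNIV. region_row b x0 t0 n))"
    using exit_green_has_sum_rows[OF assms(1-3)] assms(4)
    by (subst has_sum_reindex) (auto simp: z0 case_prod_unfold comp_def)
  then show "((\<lambda>z. exit_green p b z z0) has_sum 1) (range b)"
    unfolding z0 has_sum_exit_green_rows_iff_boundary[OF assms(3)] .
qed

end
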